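(* Let $g,f$ be constraints such that $f$ is non-trivial and $\deg(g)\le\deg(f)$. Then there exist $M$, constraints $f_1,\dots,f_M$ each expressible by $f$ with constants, index tuples $(j_i^1,\dots,j_i^{\mathrm{ar}(f_i)})$ with entries in $[\mathrm{ar}(g)]$, and rationals $\alpha_1,\dots,\alpha_M\in\mathbb{Q}$ such that for all $x\in\{0,1\}^{\mathrm{ar}(g)}$, $$g(x_1,\dots,x_{\mathrm{ar}(g)})=\sum_{i=1}^M\alpha_i\cdot f_i(x_{j_i^1},\dots,x_{j_i^{\mathrm{ar}(f_i)}}).$$
   Context: A $k$-ary constraint is $f\colon\{0,1\}^k\to\{0,1\}$ ($k=\mathrm{ar}(f)$), trivial if it is constant. Its characteristic polynomial $P_f$ is the unique multilinear polynomial over $\mathbb{R}$ in $k$ variables with $P_f(x)=f(x)$ for all $x\in\{0,1\}^k$; $\deg(f)=\deg(P_f)$. A $d$-ary constraint $h$ is expressible by $f$ with constants if $h(x_1,\dots,x_d)=f(\xi_1,\dots,\xi_k)$ identically, where each $\xi_j$ is either a variable $x_i$ for some $i\in[d]$ or one of the constants $0,1$. *)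

theory Defs
  imports Complex_Main
begin

text \<open>A constraint of arity k is a pair (k, f) with f :: bool list \<Rightarrow> bool, where f
  is only meaningful on lists of length k (points of {0,1}^k, True = 1).\<close>
type_synonym constraint = "nat \<times> (bool list \<Rightarrow> bool)"

definition ar :: "constraint \<Rightarrow> nat" where "ar c = fst c"
definition cfun :: "constraint \<Rightarrow> bool list \<Rightarrow> bool" where "cfun c = snd c"

definition trivial :: "constraint \<Rightarrow> bool" where
  "trivial c \<longleftrightarrow> (\<exists>b. \<forall>x. length x = ar c \<longrightarrow> cfun c x = b)"

text \<open>Multilinear polynomial in k variables: coefficient function on subsets S of {0..<k},
  representing sum over S of c S times the product of x_i for i in S.\<close>
definition is_char_poly :: "constraint \<Rightarrow> (nat set \<Rightarrow> real) \<Rightarrow> bool" where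
  "is_char_poly f c \<longleftrightarrow>
     (\<forall>S. \<not> S \<subseteq> {..<ar f} \<longrightarrow> c S = 0) \<and>
     (\<forall>x. length x = ar f \<longrightarrow>
        of_bool (cfun f x) = (\<Sum>S\<in>Pow {..<ar f}. c S * (\<Prod>i\<in>S. of_bool (x ! i))))"

definition char_poly :: "constraint \<Rightarrow> nat set \<Rightarrow> real" where
  "char_poly f = (THE c. is_char_poly f c)"

definition deg :: "constraint \<Rightarrow> nat" where
  "deg f = Max ({0} \<union> card ` {S. char_poly f S \<noteq> 0})"

text \<open>h of arity d is expressible by f with constants: h(x) = f(xi_1..xi_k), each xi_j either a
  variable x_i (Inl i, i < d) or a constant (Inr b).\<close>
definition expressible :: "constraint \<Rightarrow> constraint \<Rightarrow> bool" where
  "expressible h f \<longleftrightarrow>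
     (\<exists>\<xi> :: (nat + bool) list. length \<xi> = ar f \<and>
        (\<forall>i. Inl i \<in> set \<xi> \<longrightarrow> i < ar h) \<and>
        (\<forall>x. length x = ar h \<longrightarrow>
           cfun h x = cfun f (map (\<lambda>e. case e of Inl i \<Rightarrow> x ! i | Inr b \<Rightarrow> b) \<xi>)))"

end

theory Submission
  imports Defs
begin

text \<open>Every constraint is expanded in the multilinear basis, the coefficient of the monomial
  x^S being the alternating sum of the values on the subsets of S. Let T be a set of maximal
  size deg f with nonzero coefficient c_T in P_f. For |S| \<le> |T| pick T_1 \<subseteq> T with
  |T_1| = |S| and a bijection from T_1 onto S; feed the corresponding variables of S into the
  positions T_1, 0 into the positions outside T, and constants into Z = T - T_1. The
  alternating sum over these constants retains exactly the monomials U of P_f with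
  U - T_1 = Z, that is c_T x^S plus monomials of lower degree. By induction on |S| every
  monomial of degree at most deg f, and hence g, is a rational combination of instances
  of f.\<close>

definition bits_of :: "nat \<Rightarrow> nat set \<Rightarrow> bool list" where
  "bits_of n U = map (\<lambda>i. i \<in> U) [0..<n]"

definition monomial :: "nat set \<Rightarrow> bool list \<Rightarrow> 'a::comm_ring_1" where
  "monomial S x = (\<Prod>i\<in>S. of_bool (x ! i))"

definition moebius_coeff :: "nat \<Rightarrow> (bool list \<Rightarrow> 'a::comm_ring_1) \<Rightarrow> nat set \<Rightarrow> 'a" where
  "moebius_coeff n F S = (\<Sum>U\<in>Pow S. (-1) ^ (card S - card U) * F (bits_of n U))"

lemma monomial_eq_of_bool: "finite S \<Longrightarrow> monomial S x = of_bool (\<forall>i\<in>S. x ! i)"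
  unfolding monomial_def by (induction S rule: finite_induct) auto

lemma monomial_bits_of: "S \<subseteq> {..<n} \<Longrightarrow> monomial S (bits_of n X) = of_bool (S \<subseteq> X)"
  by (subst monomial_eq_of_bool) (auto simp: bits_of_def subset_iff intro: finite_subset[OF _ finite_lessThan])

lemma bits_of_true_positions: "length x = n \<Longrightarrow> bits_of n {i. i < n \<and> x ! i} = x"
  by (intro nth_equalityI) (auto simp: bits_of_def)

lemma sum_moebius_coeff:
  assumes "finite X"
  shows "(\<Sum>S\<in>Pow X. moebius_coeff n F S) = F (bits_of n X)"
proof -
  have "(-1) ^ card S * moebius_coeff n F S = (\<Sum>U\<in>Pow S. (-1) ^ card U * F (bits_of n U))"
    if "finite S" for S
  proof -
    have "(-1) ^ card S * (-1) ^ (card S - card U) = ((-1) ^ card U :: 'a)" if "U \<subseteq> S" for U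
      using card_mono[OF \<open>finite S\<close> that]
      by (simp flip: neg_one_power_add_eq_neg_one_power_diff power_add)
        (simp add: power_add flip: power_mult)
    then show ?thesis
      by (simp add: moebius_coeff_def sum_distrib_left mult.assoc[symmetric])
  qed
  then have "F (bits_of n X) = (\<Sum>S\<in>Pow X. (-1) ^ card S * ((-1) ^ card S * moebius_coeff n F S))"
    by (rule inclusion_exclusion_symmetric[OF _ assms])
  also have "\<dots> = (\<Sum>S\<in>Pow X. moebius_coeff n F S)"
    by (simp add: mult.assoc[symmetric] flip: power_add)
  finally show ?thesis ..
qed

lemma moebius_expansion:
  assumes "length x = n"
  shows "F x = (\<Sum>S\<in>Pow {..<n}. moebius_coeff n F S * monomial S x)"
proof -
  define X where "X = {i. i < n \<and> x ! i}"
  have x: "x = bits_of n X"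
    using bits_of_true_positions[OF assms] by (simp add: X_def)
  have "finite X"
    by (simp add: X_def)
  have "(\<Sum>S\<in>Pow {..<n}. moebius_coeff n F S * monomial S x)
      = (\<Sum>S\<in>Pow {..<n}. if S \<subseteq> X then moebius_coeff n F S else 0)"
    by (intro sum.cong) (auto simp: x monomial_bits_of)
  also have "\<dots> = (\<Sum>S\<in>{S\<in>Pow {..<n}. S \<subseteq> X}. moebius_coeff n F S)"
    by (rule sum.inter_filter[symmetric]) simp
  also have "{S\<in>Pow {..<n}. S \<subseteq> X} = Pow X"
    by (auto simp: X_def)
  also have "(\<Sum>S\<in>Pow X. moebius_coeff n F S) = F x"
    using sum_moebius_coeff[OF \<open>finite X\<close>] x by simp
  finally show ?thesis ..
qed

lemma moebius_coeff_multilinear: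
  fixes c :: "nat set \<Rightarrow> 'a::comm_ring_1"
  assumes "S \<subseteq> {..<n}"
  shows "moebius_coeff n (\<lambda>x. \<Sum>T\<in>Pow {..<n}. c T * monomial T x) S = c S"
proof -
  have value_at_bits: "(\<Sum>T\<in>Pow {..<n}. c T * monomial T (bits_of n U)) = sum c (Pow U)"
    if "U \<subseteq> {..<n}" for U
  proof -
    have "(\<Sum>T\<in>Pow {..<n}. c T * monomial T (bits_of n U))
        = (\<Sum>T\<in>Pow {..<n}. if T \<subseteq> U then c T else 0)"
      by (intro sum.cong) (auto simp: monomial_bits_of)
    also have "\<dots> = (\<Sum>T\<in>{T\<in>Pow {..<n}. T \<subseteq> U}. c T)"
      by (rule sum.inter_filter[symmetric]) simp
    also have "{T\<in>Pow {..<n}. T \<subseteq> U} = Pow U"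
      using that by auto
    finally show ?thesis .
  qed
  have "c S = (\<Sum>U\<in>Pow S. (-1) ^ (card S - card U) * sum c (Pow U))"
    using assms by (intro inclusion_exclusion_mobius[where g="\<lambda>U. sum c (Pow U)"])
      (auto intro: finite_subset)
  also have "\<dots> = moebius_coeff n (\<lambda>x. \<Sum>T\<in>Pow {..<n}. c T * monomial T x) S"
    unfolding moebius_coeff_def using assms by (intro sum.cong) (auto simp: value_at_bits)
  finally show ?thesis ..
qed

lemma moebius_coeff_cong:
  "(\<And>x. length x = n \<Longrightarrow> F x = G x) \<Longrightarrow> moebius_coeff n F S = moebius_coeff n G S"
  unfolding moebius_coeff_def by (auto simp: bits_of_def intro!: sum.cong)

lemma moebius_coeff_of_rat:
  "moebius_coeff n (\<lambda>x. of_rat (F x)) S = (of_rat (moebius_coeff n F S) :: 'a::field_char_0)"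
  unfolding moebius_coeff_def by (simp add: of_rat_sum of_rat_mult of_rat_power)

lemma sum_Pow_sign_of_bool_subset:
  assumes "finite Z"
  shows "(\<Sum>B\<in>Pow Z. (-1) ^ (card Z - card B) * of_bool (V \<subseteq> B)) = (of_bool (V = Z) :: 'a::ring_1)"
proof -
  have "(\<Sum>T\<in>Pow B. of_bool (V = T)) = (of_bool (V \<subseteq> B) :: 'a)" if "finite B" for B
    using that by (simp add: of_bool_def)
  then show ?thesis
    by (intro inclusion_exclusion_mobius[OF _ assms, symmetric]) simp
qed

lemma of_rat_of_bool: "of_rat (of_bool b) = of_bool b"
  by (cases b) simp_all

definition char_coeff :: "constraint \<Rightarrow> nat set \<Rightarrow> rat" where
  "char_coeff h = moebius_coeff (ar h) (\<lambda>x. of_bool (cfun h x))"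

lemma constraint_expansion:
  "length x = ar h \<Longrightarrow> of_bool (cfun h x) = (\<Sum>S\<in>Pow {..<ar h}. char_coeff h S * monomial S x)"
  unfolding char_coeff_def by (rule moebius_expansion)

lemma char_poly_eq_char_coeff:
  "char_poly h S = (if S \<subseteq> {..<ar h} then of_rat (char_coeff h S) else 0)"
proof -
  let ?c = "\<lambda>S. if S \<subseteq> {..<ar h} then of_rat (char_coeff h S) else (0::real)"
  have real_coeff: "moebius_coeff (ar h) (\<lambda>x. of_bool (cfun h x)) S = of_rat (char_coeff h S)" for S
    using moebius_coeff_of_rat[of "ar h" "\<lambda>x. of_bool (cfun h x)" S]
    by (simp add: char_coeff_def of_rat_of_bool)
  have "is_char_poly h ?c"
    unfolding is_char_poly_def
  proof (intro conjI allI impI)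
    fix x :: "bool list"
    assume "length x = ar h"
    then show "of_bool (cfun h x) = (\<Sum>S\<in>Pow {..<ar h}. ?c S * (\<Prod>i\<in>S. of_bool (x ! i)))"
      by (subst moebius_expansion) (auto simp: real_coeff monomial_def intro!: sum.cong)
  qed simp
  moreover have "c = ?c" if "is_char_poly h c" for c
  proof
    fix S
    show "c S = ?c S"
    proof (cases "S \<subseteq> {..<ar h}")
      case True
      then have "c S = moebius_coeff (ar h) (\<lambda>x. \<Sum>T\<in>Pow {..<ar h}. c T * monomial T x) S"
        by (rule moebius_coeff_multilinear[symmetric])
      also have "\<dots> = moebius_coeff (ar h) (\<lambda>x. of_bool (cfun h x)) S"
        using that by (intro moebius_coeff_cong) (simp add: is_char_poly_def monomial_def)
      finally show ?thesis
        using True by (simp add: real_coeff)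
    qed (use that in \<open>simp add: is_char_poly_def\<close>)
  qed
  ultimately show ?thesis
    unfolding char_poly_def by (metis the_equality)
qed

lemma finite_char_poly_support: "finite {S. char_poly h S \<noteq> 0}"
  by (rule finite_subset[of _ "Pow {..<ar h}"]) (auto simp: char_poly_eq_char_coeff split: if_splits)

lemma card_le_deg:
  assumes "S \<subseteq> {..<ar h}" "char_coeff h S \<noteq> 0"
  shows "card S \<le> deg h"
  unfolding deg_def using assms finite_char_poly_support
  by (intro Max_ge) (auto simp: char_poly_eq_char_coeff)

lemma nontrivial_char_coeff:
  assumes "\<not> trivial f"
  obtains S where "S \<subseteq> {..<ar f}" "char_coeff f S \<noteq> 0"
proof -
  have "\<exists>S. S \<subseteq> {..<ar f} \<and> char_coeff f S \<noteq> 0"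
  proof (rule ccontr)
    assume "\<not> ?thesis"
    then have "\<not> cfun f x" if "length x = ar f" for x
      using constraint_expansion[OF that] by (simp add: sum.neutral)
    then show False
      using assms unfolding trivial_def by blast
  qed
  then show ?thesis
    using that by blast
qed

lemma char_coeff_of_card_deg:
  assumes "\<not> trivial f"
  obtains T where "T \<subseteq> {..<ar f}" "char_coeff f T \<noteq> 0" "card T = deg f"
proof -
  obtain S where S: "S \<subseteq> {..<ar f}" "char_coeff f S \<noteq> 0"
    using nontrivial_char_coeff[OF assms] .
  have "deg f \<in> {0} \<union> card ` {S. char_poly f S \<noteq> 0}"
    unfolding deg_def using finite_char_poly_support by (intro Max_in) auto
  show ?thesis
  proof (cases "deg f = 0")
    case True
    then have "card S = deg f"
      using card_le_deg[OF S] by simp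
    with S that show ?thesis by blast
  next
    case False
    with \<open>deg f \<in> _\<close> obtain T where "char_poly f T \<noteq> 0" "card T = deg f"
      by auto
    with that show ?thesis
      by (auto simp: char_poly_eq_char_coeff split: if_splits)
  qed
qed

lemma alternating_sum_partial_substitution:
  assumes "finite Z"
  shows "(\<Sum>B\<in>Pow Z. (-1) ^ (card Z - card B) *
            of_bool (cfun f (map (\<lambda>p. if p \<in> T\<^sub>1 then x ! \<phi> p else p \<in> B) [0..<ar f])))
       = (\<Sum>U\<in>Pow {..<ar f}. char_coeff f U * of_bool (U - T\<^sub>1 = Z) * monomial (\<phi> ` (U \<inter> T\<^sub>1)) x)"
proof -
  let ?y = "\<lambda>B. map (\<lambda>p. if p \<in> T\<^sub>1 then x ! \<phi> p else p \<in> B) [0..<ar f]"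
  have monomial_y: "monomial U (?y B) = monomial (\<phi> ` (U \<inter> T\<^sub>1)) x * of_bool (U - T\<^sub>1 \<subseteq> B)"
    if "U \<in> Pow {..<ar f}" for U B
  proof -
    have "finite U"
      using that finite_subset by auto
    with that show ?thesis
      by (simp add: monomial_eq_of_bool subset_iff flip: of_bool_conj) blast
  qed
  have "(\<Sum>B\<in>Pow Z. (-1) ^ (card Z - card B) * of_bool (cfun f (?y B)))
      = (\<Sum>B\<in>Pow Z. \<Sum>U\<in>Pow {..<ar f}. (-1) ^ (card Z - card B) *
           (char_coeff f U * (monomial (\<phi> ` (U \<inter> T\<^sub>1)) x * of_bool (U - T\<^sub>1 \<subseteq> B))))"
    by (simp add: constraint_expansion monomial_y sum_distrib_left)
  also have "\<dots> = (\<Sum>U\<in>Pow {..<ar f}. char_coeff f U * monomial (\<phi> ` (U \<inter> T\<^sub>1)) x *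
           (\<Sum>B\<in>Pow Z. (-1) ^ (card Z - card B) * of_bool (U - T\<^sub>1 \<subseteq> B)))"
    by (subst sum.swap) (simp add: sum_distrib_left mult_ac)
  also have "\<dots> = (\<Sum>U\<in>Pow {..<ar f}. char_coeff f U * of_bool (U - T\<^sub>1 = Z) * monomial (\<phi> ` (U \<inter> T\<^sub>1)) x)"
    unfolding sum_Pow_sign_of_bool_subset[OF assms] by (simp add: mult_ac)
  finally show ?thesis .
qed

definition instantiate :: "bool list \<Rightarrow> (nat + bool) list \<Rightarrow> bool list" where
  "instantiate x \<xi> = map (\<lambda>e. case e of Inl i \<Rightarrow> x ! i | Inr b \<Rightarrow> b) \<xi>"

definition valid_subst :: "constraint \<Rightarrow> nat \<Rightarrow> (nat + bool) list \<Rightarrow> bool" where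
  "valid_subst f n \<xi> \<longleftrightarrow> length \<xi> = ar f \<and> (\<forall>i. Inl i \<in> set \<xi> \<longrightarrow> i < n)"

definition spanned :: "constraint \<Rightarrow> nat \<Rightarrow> (bool list \<Rightarrow> rat) \<Rightarrow> bool" where
  "spanned f n F \<longleftrightarrow> (\<exists>L. (\<forall>(a, \<xi>)\<in>set L. valid_subst f n \<xi>) \<and>
     (\<forall>x. length x = n \<longrightarrow>
        F x = (\<Sum>(a, \<xi>)\<leftarrow>L. a * of_bool (cfun f (instantiate x \<xi>)))))"

lemma spanned_instance:
  "valid_subst f n \<xi> \<Longrightarrow> spanned f n (\<lambda>x. of_bool (cfun f (instantiate x \<xi>)))"
  unfolding spanned_def by (intro exI[of _ "[(1, \<xi>)]"]) auto

lemma spanned_zero: "spanned f n (\<lambda>x. 0)"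
  unfolding spanned_def by (intro exI[of _ "[]"]) auto

lemma spanned_add:
  assumes "spanned f n F" "spanned f n G"
  shows "spanned f n (\<lambda>x. F x + G x)"
proof -
  obtain L1 L2 where "\<forall>(a, \<xi>)\<in>set L1. valid_subst f n \<xi>" "\<forall>(a, \<xi>)\<in>set L2. valid_subst f n \<xi>"
    "\<forall>x. length x = n \<longrightarrow> F x = (\<Sum>(a, \<xi>)\<leftarrow>L1. a * of_bool (cfun f (instantiate x \<xi>)))"
    "\<forall>x. length x = n \<longrightarrow> G x = (\<Sum>(a, \<xi>)\<leftarrow>L2. a * of_bool (cfun f (instantiate x \<xi>)))"
    using assms unfolding spanned_def by blast
  then show ?thesis
    unfolding spanned_def by (intro exI[of _ "L1 @ L2"]) auto
qed

lemma spanned_scale: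
  assumes "spanned f n F"
  shows "spanned f n (\<lambda>x. c * F x)"
proof -
  obtain L where "\<forall>(a, \<xi>)\<in>set L. valid_subst f n \<xi>"
    "\<forall>x. length x = n \<longrightarrow> F x = (\<Sum>(a, \<xi>)\<leftarrow>L. a * of_bool (cfun f (instantiate x \<xi>)))"
    using assms unfolding spanned_def by blast
  moreover have "c * (\<Sum>(a, \<xi>)\<leftarrow>L. a * g \<xi>) = (\<Sum>(a, \<xi>)\<leftarrow>map (\<lambda>(a, \<xi>). (c * a, \<xi>)) L. a * g \<xi>)"
    for g :: "(nat + bool) list \<Rightarrow> rat"
    by (induction L) (auto simp: algebra_simps)
  ultimately show ?thesis
    unfolding spanned_def by (intro exI[of _ "map (\<lambda>(a, \<xi>). (c * a, \<xi>)) L"]) auto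
qed

lemma spanned_diff:
  assumes "spanned f n F" "spanned f n G"
  shows "spanned f n (\<lambda>x. F x - G x)"
  using spanned_add[OF assms(1) spanned_scale[OF assms(2), of "-1"]] by simp

lemma spanned_cong:
  "spanned f n F \<Longrightarrow> (\<And>x. length x = n \<Longrightarrow> G x = F x) \<Longrightarrow> spanned f n G"
  unfolding spanned_def by auto

lemma spanned_sum:
  "finite I \<Longrightarrow> (\<And>i. i \<in> I \<Longrightarrow> spanned f n (F i)) \<Longrightarrow> spanned f n (\<lambda>x. \<Sum>i\<in>I. F i x)"
  by (induction I rule: finite_induct) (auto intro: spanned_zero spanned_add)

lemma spanned_monomial_plus_remainder:
  assumes "T \<subseteq> {..<ar f}" "T\<^sub>1 \<subseteq> T" "bij_betw \<phi> T\<^sub>1 S" "S \<subseteq> {..<n}"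
  shows "spanned f n (\<lambda>x. char_coeff f T * monomial S x +
           (\<Sum>U\<in>Pow {..<ar f} - {T}.
              char_coeff f U * of_bool (U - T\<^sub>1 = T - T\<^sub>1) * monomial (\<phi> ` (U \<inter> T\<^sub>1)) x))"
proof -
  define Z where "Z = T - T\<^sub>1"
  define \<xi> where "\<xi> B = map (\<lambda>p. if p \<in> T\<^sub>1 then Inl (\<phi> p) else Inr (p \<in> B)) [0..<ar f]" for B
  have "finite Z"
    using assms(1) by (auto simp: Z_def intro: finite_subset)
  have "valid_subst f n (\<xi> B)" for B
    using assms(3,4) by (auto simp: valid_subst_def \<xi>_def bij_betw_def split: if_splits)
  then have alternating_sum:
    "spanned f n (\<lambda>x. \<Sum>B\<in>Pow Z. (-1) ^ (card Z - card B) * of_bool (cfun f (instantiate x (\<xi> B))))"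
    using \<open>finite Z\<close> by (intro spanned_sum spanned_scale spanned_instance) auto
  have eq: "char_coeff f T * monomial S x +
      (\<Sum>U\<in>Pow {..<ar f} - {T}. char_coeff f U * of_bool (U - T\<^sub>1 = Z) * monomial (\<phi> ` (U \<inter> T\<^sub>1)) x)
      = (\<Sum>B\<in>Pow Z. (-1) ^ (card Z - card B) * of_bool (cfun f (instantiate x (\<xi> B))))" for x
  proof -
    have "\<phi> ` (T \<inter> T\<^sub>1) = S"
      using assms(2,3) by (auto simp: bij_betw_def Int_absorb1)
    moreover have "instantiate x (\<xi> B) = map (\<lambda>p. if p \<in> T\<^sub>1 then x ! \<phi> p else p \<in> B) [0..<ar f]" for B
      by (simp add: instantiate_def \<xi>_def)
    ultimately show ?thesis
      using assms(1) alternating_sum_partial_substitution[OF \<open>finite Z\<close>, of f T\<^sub>1 x \<phi>]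
      by (simp add: Z_def sum.remove)
  qed
  show ?thesis
    unfolding Z_def[symmetric] by (rule spanned_cong[OF alternating_sum]) (rule eq)
qed

lemma spanned_monomial:
  assumes T: "T \<subseteq> {..<ar f}" "char_coeff f T \<noteq> 0"
  shows "S \<subseteq> {..<n} \<Longrightarrow> card S \<le> card T \<Longrightarrow> spanned f n (monomial S)"
proof (induction "card S" arbitrary: S rule: less_induct)
  case less
  have "finite T" "finite S"
    using T(1) less.prems(1) by (auto intro: finite_subset)
  obtain T\<^sub>1 where T\<^sub>1: "T\<^sub>1 \<subseteq> T" "card T\<^sub>1 = card S"
    using obtain_subset_with_card_n[OF less.prems(2)] by blast
  with \<open>finite T\<close> \<open>finite S\<close> obtain \<phi> where \<phi>: "bij_betw \<phi> T\<^sub>1 S"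
    by (metis finite_same_card_bij finite_subset)
  define t where "t U x = char_coeff f U * of_bool (U - T\<^sub>1 = T - T\<^sub>1) * monomial (\<phi> ` (U \<inter> T\<^sub>1)) x"
    for U x
  have "spanned f n (t U)" if U: "U \<in> Pow {..<ar f} - {T}" for U
  proof (cases "U - T\<^sub>1 = T - T\<^sub>1")
    case True
    with U T\<^sub>1(1) have "U \<inter> T\<^sub>1 \<subset> T\<^sub>1"
      by auto
    then have "card (\<phi> ` (U \<inter> T\<^sub>1)) < card S"
      using \<phi> T\<^sub>1 \<open>finite T\<close>
      by (metis bij_betw_def card_image inj_on_subset inf_le2 psubset_card_mono finite_subset)
    moreover have "\<phi> ` (U \<inter> T\<^sub>1) \<subseteq> {..<n}"
      using \<phi> less.prems(1) by (auto simp: bij_betw_def)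
    ultimately have "spanned f n (monomial (\<phi> ` (U \<inter> T\<^sub>1)))"
      using less by simp
    then show ?thesis
      unfolding t_def by (rule spanned_scale)
  qed (rule spanned_cong[OF spanned_zero], simp add: t_def)
  then have "spanned f n (\<lambda>x. \<Sum>U\<in>Pow {..<ar f} - {T}. t U x)"
    by (intro spanned_sum) auto
  with spanned_monomial_plus_remainder[OF T(1) T\<^sub>1(1) \<phi> less.prems(1)]
  have "spanned f n (\<lambda>x. (char_coeff f T * monomial S x + (\<Sum>U\<in>Pow {..<ar f} - {T}. t U x))
                          - (\<Sum>U\<in>Pow {..<ar f} - {T}. t U x))"
    unfolding t_def by (rule spanned_diff)
  then have "spanned f n (\<lambda>x. char_coeff f T * monomial S x)"
    by (rule spanned_cong) simp
  then have "spanned f n (\<lambda>x. inverse (char_coeff f T) * (char_coeff f T * monomial S x))"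
    by (rule spanned_scale)
  then show ?case
    by (rule spanned_cong) (simp add: T(2))
qed

lemma spanned_of_deg_le:
  assumes "\<not> trivial f" "deg h \<le> deg f"
  shows "spanned f (ar h) (\<lambda>x. of_bool (cfun h x))"
proof -
  obtain T where T: "T \<subseteq> {..<ar f}" "char_coeff f T \<noteq> 0" "card T = deg f"
    using char_coeff_of_card_deg[OF assms(1)] .
  have "spanned f (ar h) (\<lambda>x. char_coeff h S * monomial S x)" if "S \<subseteq> {..<ar h}" for S
  proof (cases "char_coeff h S = 0")
    case True
    then show ?thesis
      by (simp add: spanned_zero)
  next
    case False
    then have "card S \<le> card T"
      using card_le_deg[OF that] assms(2) T(3) by simp
    with that show ?thesis
      by (intro spanned_scale spanned_monomial[OF T(1,2)])
  qed
  then have "spanned f (ar h) (\<lambda>x. \<Sum>S\<in>Pow {..<ar h}. char_coeff h S * monomial S x)"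
    by (intro spanned_sum) auto
  then show ?thesis
    by (rule spanned_cong) (rule constraint_expansion)
qed

lemma spanned_imp_sum_of_expressible:
  assumes "spanned f n F"
  shows "\<exists>(M::nat) (fs :: nat \<Rightarrow> constraint) (js :: nat \<Rightarrow> nat list) (\<alpha> :: nat \<Rightarrow> rat).
           (\<forall>i<M. expressible (fs i) f \<and> length (js i) = ar (fs i) \<and> set (js i) \<subseteq> {..<n}) \<and>
           (\<forall>x. length x = n \<longrightarrow>
              F x = (\<Sum>i<M. \<alpha> i * of_bool (cfun (fs i) (map (\<lambda>j. x ! j) (js i)))))"
proof -
  obtain L where L: "\<forall>(a, \<xi>)\<in>set L. valid_subst f n \<xi>"
      "\<forall>x. length x = n \<longrightarrow> F x = (\<Sum>(a, \<xi>)\<leftarrow>L. a * of_bool (cfun f (instantiate x \<xi>)))"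
    using assms unfolding spanned_def by blast
  define fs where "fs i = (n, \<lambda>x. cfun f (instantiate x (snd (L ! i))))" for i
  have "expressible (fs i) f" if "i < length L" for i
  proof -
    have "valid_subst f n (snd (L ! i))"
      using L(1) nth_mem[OF that] by (cases "L ! i") auto
    then show ?thesis
      unfolding expressible_def valid_subst_def
      by (intro exI[of _ "snd (L ! i)"]) (simp add: fs_def ar_def cfun_def instantiate_def)
  qed
  moreover have "F x = (\<Sum>i<length L. fst (L ! i) * of_bool (cfun (fs i) (map (\<lambda>j. x ! j) [0..<n])))"
    if "length x = n" for x
  proof -
    have "map (\<lambda>j. x ! j) [0..<n] = x"
      using that map_nth[of x] by simp
    then show ?thesis
      using L(2) that
      by (simp add: fs_def cfun_def sum_list_sum_nth atLeast0LessThan case_prod_beta)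
  qed
  ultimately show ?thesis
    by (intro exI[of _ "length L"] exI[of _ fs] exI[of _ "\<lambda>_. [0..<n]"] exI[of _ "\<lambda>i. fst (L ! i)"])
      (auto simp: fs_def ar_def)
qed

theorem proposition16:
  fixes g f :: constraint
  assumes "\<not> trivial f" and "deg g \<le> deg f"
  shows "\<exists>(M::nat) (fs :: nat \<Rightarrow> constraint) (js :: nat \<Rightarrow> nat list) (\<alpha> :: nat \<Rightarrow> rat).
           (\<forall>i<M. expressible (fs i) f \<and> length (js i) = ar (fs i) \<and>
                   set (js i) \<subseteq> {..<ar g}) \<and>
           (\<forall>x. length x = ar g \<longrightarrow>
              (of_bool (cfun g x) :: rat) =
                (\<Sum>i<M. \<alpha> i * of_bool (cfun (fs i) (map (\<lambda>j. x ! j) (js i)))))"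
  using spanned_imp_sum_of_expressible[OF spanned_of_deg_le[OF assms]] .

end
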